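(* Under the standing setup and assumptions, with $Z_k=\sum_{j=0}^{k-1}a_j$, for every $k\ge1$, $$\mathbb{E}\Big[\frac{\sum_{j=0}^{k-1}a_j\mathcal{L}(\boldsymbol{x}^j,\boldsymbol{\lambda}^j)}{Z_k}\Big]-\mathcal{L}(\boldsymbol{x}^*,\boldsymbol{\lambda}^* )\le\frac{1}{Z_k}\Big(RG\sum_{j=0}^{k-1}(N-\bar A_j(\beta))a_j+(\beta\sigma^2+L^2)\sum_{j=0}^{k-1}a_j^2+2LG\sum_{j=0}^{k-1}(N-\bar A_j(\beta))a_j^2+\mathbb{E}\big[\|\boldsymbol{x}^0-\boldsymbol{x}^*\|^2\big]+L^2\sum_{j=0}^{k-1}(N-\bar A_j(\beta))^2a_j^2\Big).$$
   Context: Standing setup (DPD-AirComp). Let $N\ge1$, $D\ge1$, $\mathcal{N}=\{1,\dots,N\}$. Let $f_0,f_1,\dots,f_N:\mathbb{R}^D\to\mathbb{R}$ be convex (not necessarily differentiable) and $\mathcal{X}\subset\mathbb{R}^D$ nonempty, compact and convex. Consider $\min_{\boldsymbol{x}\in\mathcal{X}} f_0(\boldsymbol{x})$ s.t. $f_i(\boldsymbol{x})\le 0$, $i\in\mathcal{N}$, with optimal value $f_0^*$. Write $\boldsymbol{F}(\boldsymbol{x})=[f_1(\boldsymbol{x}),\dots,f_N(\boldsymbol{x})]^T$, the Lagrangian $\mathcal{L}(\boldsymbol{x},\boldsymbol{\lambda})=f_0(\boldsymbol{x})+\sum_{i=1}^N\lambda_if_i(\boldsymbol{x})$ on $\mathcal{X}\times\mathbb{R}^N_+$,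 and the dual function $q(\boldsymbol{\lambda})=\inf_{\boldsymbol{x}\in\mathcal{X}}\mathcal{L}(\boldsymbol{x},\boldsymbol{\lambda})$. Let $\boldsymbol{g}_i(\boldsymbol{x})$ denote a (fixed choice of) subgradient of $f_i$ at $\boldsymbol{x}$, $i=0,\dots,N$, and $\boldsymbol{\mathcal{L}}_x(\boldsymbol{x},\boldsymbol{\lambda})=\boldsymbol{g}_0(\boldsymbol{x})+\sum_i\lambda_i\boldsymbol{g}_i(\boldsymbol{x})$, $\boldsymbol{\mathcal{L}}_\lambda(\boldsymbol{x},\boldsymbol{\lambda})=\boldsymbol{F}(\boldsymbol{x})$. Let $\bar{\boldsymbol{x}}\in\mathcal{X}$ be a Slater point ($f_i(\bar{\boldsymbol{x}})<0$ for all $i$), $\gamma=\min_{1\le i\le N}\{-f_i(\bar{\boldsymbol{x}})\}$, $\tilde q=q(\tilde{\boldsymbol{\lambda}})$ for some fixed $\tilde{\boldsymbol{\lambda}}\succeq 0$, and for a parameter $r>0$ let $\mathcal{D}=\{\boldsymbol{\lambda}\succeq 0:\|\boldsymbol{\lambda}\|_\infty\le \frac{f_0(\bar{\boldsymbol{x}})-\tilde q}{\gamma}+r\}$. $\mathcal{P}_{\mathcal{S}}[z]=\arg\min_{s\in\mathcal{S}}\|s-z\|^2$ is Euclidean projection. Let $(\boldsymbol{x}^*,\boldsymbol{\lambda}^* )\in\mathcal{X}\times\mathcal{D}$ be a saddle point of $\mathcal{L}$, i.e. $\mathcal{L}(\boldsymbol{x}^*,\boldsymbol{\lambda})\le\mathcal{L}(\boldsymbol{x}^*,\boldsymbol{\lambda}^*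 )\le\mathcal{L}(\boldsymbol{x},\boldsymbol{\lambda}^* )$ for all $\boldsymbol{x}\in\mathcal{X},\boldsymbol{\lambda}\in\mathcal{D}$, with $\mathcal{L}(\boldsymbol{x}^*,\boldsymbol{\lambda}^* )=f_0^*$. Iteration: given initial $\boldsymbol{x}^0\in\mathcal{X}$, $\boldsymbol{\lambda}^0\in\mathcal{D}$, step sizes $a_k\in(0,1)$, a preprocessing scalar $\beta>0$ and a power budget $P_{\max}>0$, at round $k$ set $\boldsymbol{s}_i^k=\lambda_i^k\boldsymbol{g}_i(\boldsymbol{x}^k)$; with random channel coefficients $h_i^k$, the participating set is $\mathcal{A}^k=\{i\in\mathcal{N}: |h_i^k|^2\ge \|\boldsymbol{s}_i^k\|^2/(\beta P_{\max})\}$; the server obtains $\tilde{\boldsymbol{y}}^k=\sum_{i\in\mathcal{A}^k}\boldsymbol{s}_i^k+\sqrt{\beta}\,\boldsymbol{n}^k$, where $\boldsymbol{n}^k\in\mathbb{R}^D$ is zero-mean noise with $\mathbb{E}\|\boldsymbol{n}^k\|^2=\sigma^2$, independent of all other randomness; updates are $\boldsymbol{x}^{k+1}=\mathcal{P}_{\mathcal{X}}[\boldsymbol{x}^k-a_k(\boldsymbol{g}_0(\boldsymbol{x}^k)+\tilde{\boldsymbol{y}}^k)]$ and $\lambda_i^{k+1}=\mathcal{P}_{\mathcal{D}}[\lambda_i^k+a_kf_i(\boldsymbol{x}^k)]$ (componentwise projection onto $[0,\frac{f_0(\bar{\boldsymbol{x}})-\tilde q}{\gamma}+r]$). $\bar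 A_k(\beta)=\mathbb{E}[|\mathcal{A}^k|]$ is the average number of participating users in round $k$. Expectations are over channels and noise. Assumptions: there are constants $G,L,R>0$ with $L>G$ such that for all $i,k$: $\|\lambda_i^k\boldsymbol{g}_i(\boldsymbol{x}^k)\|\le G$, $\|\boldsymbol{\mathcal{L}}_x(\boldsymbol{x}^k,\boldsymbol{\lambda}^k)\|\le L$, $\|\boldsymbol{F}(\boldsymbol{x}^k)\|\le L$, and $\|\boldsymbol{x}^k-\boldsymbol{x}^*\|\le R$. *)

theory Defs
  imports "HOL-Analysis.Analysis" "HOL-Probability.Probability"
begin

definition is_subgradient :: "('a::real_inner \<Rightarrow> real) \<Rightarrow> 'a \<Rightarrow> 'a \<Rightarrow> bool" where
  "is_subgradient f x v \<longleftrightarrow> (\<forall>y. f y \<ge> f x + inner v (y - x))"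

text \<open>Lagrangian L(x,lambda) = f_0(x) + sum_{i=1}^N lambda_i f_i(x).
  Multipliers are functions nat => real; only the entries 1..N matter.\<close>
definition lagr :: "(nat \<Rightarrow> 'a \<Rightarrow> real) \<Rightarrow> nat \<Rightarrow> 'a \<Rightarrow> (nat \<Rightarrow> real) \<Rightarrow> real" where
  "lagr f N x lam = f 0 x + (\<Sum>i=1..N. lam i * f i x)"

definition dual_fn :: "(nat \<Rightarrow> 'a \<Rightarrow> real) \<Rightarrow> nat \<Rightarrow> 'a set \<Rightarrow> (nat \<Rightarrow> real) \<Rightarrow> real" where
  "dual_fn f N X lam = Inf ((\<lambda>x. lagr f N x lam) ` X)"

definition opt_val :: "(nat \<Rightarrow> 'a \<Rightarrow> real) \<Rightarrow> nat \<Rightarrow> 'a set \<Rightarrow> real" where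
  "opt_val f N X = Inf (f 0 ` {x \<in> X. \<forall>i\<in>{1..N}. f i x \<le> 0})"

definition dual_box :: "nat \<Rightarrow> real \<Rightarrow> (nat \<Rightarrow> real) set" where
  "dual_box N Bd = {lam. \<forall>i\<in>{1..N}. 0 \<le> lam i \<and> lam i \<le> Bd}"

text \<open>Participating set A^k, given the channel coefficients hk i = h_i^k of round k,
  the current iterate x and multipliers lam.\<close>
definition part_set :: "(nat \<Rightarrow> 'a::real_normed_vector \<Rightarrow> 'a) \<Rightarrow> nat \<Rightarrow> real \<Rightarrow> real
    \<Rightarrow> (nat \<Rightarrow> complex) \<Rightarrow> 'a \<Rightarrow> (nat \<Rightarrow> real) \<Rightarrow> nat set" where
  "part_set g N beta Pmax hk x lam =
     {i \<in> {1..N}. cmod (hk i) ^ 2 \<ge> norm (lam i *\<^sub>R g i x) ^ 2 / (beta * Pmax)}"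

text \<open>The DPD-AirComp iteration for one realisation of channels hw i k = h_i^k
  and noises nw k = n^k. Returns (x^k, lambda^k).\<close>
primrec dpd_iter :: "(nat \<Rightarrow> 'a::euclidean_space \<Rightarrow> real) \<Rightarrow> (nat \<Rightarrow> 'a \<Rightarrow> 'a) \<Rightarrow> 'a set
    \<Rightarrow> nat \<Rightarrow> real \<Rightarrow> real \<Rightarrow> real \<Rightarrow> (nat \<Rightarrow> real)
    \<Rightarrow> (nat \<Rightarrow> nat \<Rightarrow> complex) \<Rightarrow> (nat \<Rightarrow> 'a) \<Rightarrow> 'a \<Rightarrow> (nat \<Rightarrow> real) \<Rightarrow> nat
    \<Rightarrow> 'a \<times> (nat \<Rightarrow> real)" where
  "dpd_iter f g X N Bd beta Pmax a hw nw x0 l0 0 = (x0, l0)"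
| "dpd_iter f g X N Bd beta Pmax a hw nw x0 l0 (Suc k) =
     (let x = fst (dpd_iter f g X N Bd beta Pmax a hw nw x0 l0 k);
          lam = snd (dpd_iter f g X N Bd beta Pmax a hw nw x0 l0 k);
          A = part_set g N beta Pmax (\<lambda>i. hw i k) x lam;
          y = (\<Sum>i\<in>A. lam i *\<^sub>R g i x) + sqrt beta *\<^sub>R nw k
      in (closest_point X (x - a k *\<^sub>R (g 0 x + y)),
          \<lambda>i. closest_point {0..Bd} (lam i + a k * f i x)))"

definition other_rand :: "'w measure \<Rightarrow> (nat \<Rightarrow> nat \<Rightarrow> 'w \<Rightarrow> complex) \<Rightarrow> (nat \<Rightarrow> 'w \<Rightarrow> 'b::topological_space) \<Rightarrow> nat \<Rightarrow> 'w set set" where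
  "other_rand M h n k = sigma_sets (space M)
     ((\<Union>i j. {h i j -` B \<inter> space M | B. B \<in> sets borel})
      \<union> (\<Union>j\<in>-{k}. {n j -` B \<inter> space M | B. B \<in> sets borel}))"

end

theory Submission
  imports Defs
begin

text \<open>Each round is a projected subgradient step on the Lagrangian, perturbed in two ways.
  The users outside the participating set are missing from the received sum; their aggregate
  has norm at most \<open>(N - |A\<^sup>k|) G\<close>, and since projection onto \<open>X\<close> is nonexpansive and all
  iterates stay within \<open>R\<close> of \<open>x\<^sup>*\<close>, this costs at most \<open>2 a\<^sub>k (N - |A\<^sup>k|) G R\<close> in the squared
  distance to \<open>x\<^sup>*\<close>. The noise \<open>n\<^sup>k\<close> has mean zero and is independent of the current iterate,
  which depends only on the channels and earlier noises, so its cross term vanishes in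
  expectation and only \<open>\<beta> \<sigma>\<^sup>2 a\<^sub>k\<^sup>2\<close> remains. Combined with the subgradient inequality for the
  Lagrangian and the saddle-point property, the per-round inequalities telescope to a bound
  that is sharper than the stated one, which only adds nonnegative terms.\<close>

lemma sum_part_set_eq:
  "(\<Sum>i\<in>part_set g N beta Pmax hk x lam. F i) =
   (\<Sum>i\<in>{1..N}. if norm (lam i *\<^sub>R g i x) ^ 2 / (beta * Pmax) \<le> cmod (hk i) ^ 2 then F i else 0)"
  unfolding part_set_def by (rule sum.inter_filter) simp

lemma borel_measurable_sum_part_set:
  fixes F :: "nat \<Rightarrow> 'w \<Rightarrow> 'b::{second_countable_topology, real_normed_vector}"
  assumes "\<And>i. i \<in> {1..N} \<Longrightarrow> (\<lambda>\<omega>. hk \<omega> i) \<in> borel_measurable M"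
    and "\<And>i. i \<in> {1..N} \<Longrightarrow> (\<lambda>\<omega>. lam \<omega> i *\<^sub>R g i (x \<omega>)) \<in> borel_measurable M"
    and "\<And>i. i \<in> {1..N} \<Longrightarrow> F i \<in> borel_measurable M"
  shows "(\<lambda>\<omega>. \<Sum>i\<in>part_set g N beta Pmax (hk \<omega>) (x \<omega>) (lam \<omega>). F i \<omega>) \<in> borel_measurable M"
  unfolding sum_part_set_eq using assms by measurable

lemma dpd_iter_measurable:
  fixes f :: "nat \<Rightarrow> 'a::euclidean_space \<Rightarrow> real" and g :: "nat \<Rightarrow> 'a \<Rightarrow> 'a"
    and a :: "nat \<Rightarrow> real" and beta Pmax :: real and x0 :: 'a and l0 :: "nat \<Rightarrow> real"
  assumes X: "X \<noteq> {}" "closed X" "convex X" and Bd: "0 \<le> Bd"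
    and f: "\<And>i. i \<le> N \<Longrightarrow> f i \<in> borel_measurable borel"
    and g: "\<And>i. i \<le> N \<Longrightarrow> g i \<in> borel_measurable borel"
    and h: "\<And>i j. h i j \<in> borel_measurable F"
    and n: "\<And>j. j < K \<Longrightarrow> n j \<in> borel_measurable F"
    and "j \<le> K"
  defines "it \<equiv> \<lambda>\<omega>. dpd_iter f g X N Bd beta Pmax a (\<lambda>i j. h i j \<omega>) (\<lambda>j. n j \<omega>) x0 l0"
  shows "(\<lambda>\<omega>. fst (it \<omega> j)) \<in> borel_measurable F \<and> (\<forall>i\<le>N. (\<lambda>\<omega>. snd (it \<omega> j) i) \<in> borel_measurable F)"
  using \<open>j \<le> K\<close>
proof (induction j)
  case 0
  then show ?case by (simp add: it_def)
next
  case (Suc j)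
  define x where "x \<omega> = fst (it \<omega> j)" for \<omega>
  define lam where "lam \<omega> = snd (it \<omega> j)" for \<omega>
  from Suc have x: "x \<in> borel_measurable F" and lam: "\<And>i. i \<le> N \<Longrightarrow> (\<lambda>\<omega>. lam \<omega> i) \<in> borel_measurable F"
    unfolding x_def lam_def by auto
  have gx: "(\<lambda>\<omega>. g i (x \<omega>)) \<in> borel_measurable F" if "i \<le> N" for i
    using measurable_compose[OF x g[OF that]] by simp
  have fx: "(\<lambda>\<omega>. f i (x \<omega>)) \<in> borel_measurable F" if "i \<le> N" for i
    using measurable_compose[OF x f[OF that]] by simp
  have proj_X: "closest_point X \<in> borel_measurable borel"
    using X by (intro borel_measurable_continuous_onI continuous_on_closest_point) auto
  have proj_box: "closest_point {0..Bd} \<in> borel_measurable borel"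
    using Bd by (intro borel_measurable_continuous_onI continuous_on_closest_point) auto
  have aggregate: "(\<lambda>\<omega>. \<Sum>i\<in>part_set g N beta Pmax (\<lambda>i. h i j \<omega>) (x \<omega>) (lam \<omega>). lam \<omega> i *\<^sub>R g i (x \<omega>))
      \<in> borel_measurable F"
    by (rule borel_measurable_sum_part_set) (use h lam gx in auto)
  have "(\<lambda>\<omega>. fst (it \<omega> (Suc j))) \<in> borel_measurable F"
    using Suc.prems by (auto simp: it_def x_def[unfolded it_def, symmetric] lam_def[unfolded it_def, symmetric]
        Let_def intro!: measurable_compose[OF _ proj_X] borel_measurable_diff borel_measurable_scaleR
          borel_measurable_add aggregate gx x n)
  moreover have "(\<lambda>\<omega>. snd (it \<omega> (Suc j)) i) \<in> borel_measurable F" if "i \<le> N" for i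
    using that by (auto simp: it_def x_def[unfolded it_def, symmetric] lam_def[unfolded it_def, symmetric]
        Let_def intro!: measurable_compose[OF _ proj_box] borel_measurable_add
          borel_measurable_times lam fx)
  ultimately show ?case by blast
qed

lemma measurable_sigma_of_preimages:
  assumes "G \<subseteq> Pow (space M)" and "\<And>B. B \<in> sets borel \<Longrightarrow> f -` B \<inter> space M \<in> G"
  shows "f \<in> borel_measurable (sigma (space M) G)"
proof (rule measurableI)
  fix B :: "'b set"
  assume "B \<in> sets borel"
  then show "f -` B \<inter> space (sigma (space M) G) \<in> sets (sigma (space M) G)"
    using assms by (simp add: sets_measure_of space_measure_of_conv sigma_sets.Basic)
qed simp

lemma (in prob_space) indep_var_if_preimages_indep:
  assumes indep: "indep_set A B"
    and rv: "random_variable S U" "random_variable T V"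
    and U: "\<And>E. E \<in> sets S \<Longrightarrow> U -` E \<inter> space M \<in> A"
    and V: "\<And>E. E \<in> sets T \<Longrightarrow> V -` E \<inter> space M \<in> B"
  shows "indep_var S U T V"
  unfolding indep_var_def indep_vars_def2
proof
  show "\<forall>i\<in>UNIV. random_variable (case_bool S T i) (case_bool U V i)"
    using rv by (simp split: bool.split)
  show "indep_sets (\<lambda>i. {case_bool U V i -` E \<inter> space M |E. E \<in> sets (case_bool S T i)}) UNIV"
    by (rule indep_sets_mono_sets[OF indep[unfolded indep_set_def]]) (use U V in \<open>auto split: bool.split\<close>)
qed

lemma (in prob_space) integral_inner_indep_mean_zero:
  fixes Y n :: "'a \<Rightarrow> 'b::euclidean_space"
  assumes indep: "indep_set {n -` B \<inter> space M | B. B \<in> sets borel} (sets F)"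
    and space_F: "space F = space M" and Y_F: "Y \<in> borel_measurable F" and Y: "integrable M Y"
    and n: "integrable M n" and mean_zero: "(\<integral>\<omega>. n \<omega> \<partial>M) = 0"
  shows "integrable M (\<lambda>\<omega>. Y \<omega> \<bullet> n \<omega>)" and "(\<integral>\<omega>. Y \<omega> \<bullet> n \<omega> \<partial>M) = 0"
proof -
  have coord_indep: "indep_var borel (\<lambda>\<omega>. n \<omega> \<bullet> b) borel (\<lambda>\<omega>. Y \<omega> \<bullet> b)" for b
  proof (rule indep_var_if_preimages_indep[OF indep])
    fix E :: "real set"
    assume E: "E \<in> sets borel"
    have "(\<lambda>x. x \<bullet> b) -` E \<in> sets borel"
      using measurable_sets[OF _ E, of "\<lambda>x::'b. x \<bullet> b" borel] by simp
    then show "(\<lambda>\<omega>. n \<omega> \<bullet> b) -` E \<inter> space M \<in> {n -` B \<inter> space M |B. B \<in> sets borel}"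
      by (intro CollectI exI[of _ "(\<lambda>x. x \<bullet> b) -` E"]) auto
    show "(\<lambda>\<omega>. Y \<omega> \<bullet> b) -` E \<inter> space M \<in> sets F"
      using measurable_sets[OF _ E, of "\<lambda>\<omega>. Y \<omega> \<bullet> b" F] Y_F space_F by simp
  qed (use n Y in auto)
  have inner_sum: "Y \<omega> \<bullet> n \<omega> = (\<Sum>b\<in>Basis. (n \<omega> \<bullet> b) * (Y \<omega> \<bullet> b))" for \<omega>
    by (rule trans[OF euclidean_inner]) (simp add: mult.commute)
  have coord_integrable: "integrable M (\<lambda>\<omega>. (n \<omega> \<bullet> b) * (Y \<omega> \<bullet> b))" for b
    using coord_indep n Y by (intro indep_var_integrable) auto
  then show "integrable M (\<lambda>\<omega>. Y \<omega> \<bullet> n \<omega>)"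
    unfolding inner_sum by (intro Bochner_Integration.integrable_sum)
  have "(\<integral>\<omega>. (n \<omega> \<bullet> b) * (Y \<omega> \<bullet> b) \<partial>M) = 0" for b
    using indep_var_lebesgue_integral[OF coord_indep] n Y mean_zero by simp
  then show "(\<integral>\<omega>. Y \<omega> \<bullet> n \<omega> \<partial>M) = 0"
    unfolding inner_sum using coord_integrable by (simp add: Bochner_Integration.integral_sum)
qed

lemma lagr_diff_le_inner_subgradient:
  fixes f :: "nat \<Rightarrow> 'a::real_inner \<Rightarrow> real"
  assumes sub: "\<And>i. i \<le> N \<Longrightarrow> is_subgradient (f i) x (g i x)"
    and lam: "\<And>i. i \<in> {1..N} \<Longrightarrow> 0 \<le> lam i"
  shows "lagr f N x lam - lagr f N y lam \<le> (g 0 x + (\<Sum>i=1..N. lam i *\<^sub>R g i x)) \<bullet> (x - y)"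
proof -
  have sub_ineq: "f i x - f i y \<le> g i x \<bullet> (x - y)" if "i \<le> N" for i
    using sub[OF that] unfolding is_subgradient_def by (smt (verit) inner_minus_right minus_diff_eq)
  have "(\<Sum>i=1..N. lam i * f i x - lam i * f i y) \<le> (\<Sum>i=1..N. lam i * (g i x \<bullet> (x - y)))"
    by (intro sum_mono) (use sub_ineq lam in \<open>auto simp flip: right_diff_distrib intro: mult_left_mono\<close>)
  moreover have "f 0 x - f 0 y \<le> g 0 x \<bullet> (x - y)"
    using sub_ineq by simp
  ultimately show ?thesis
    by (simp add: lagr_def inner_add_left inner_sum_left sum_subtractf)
qed

lemma power2_le_add_bounded:
  fixes d e t R :: real
  assumes "0 \<le> d" "d \<le> R" "d \<le> e + t" "0 \<le> t" "0 \<le> e"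
  shows "d\<^sup>2 \<le> e\<^sup>2 + 2 * t * R"
proof (cases "d \<le> e")
  case True
  then show ?thesis using assms by (smt (verit) mult_nonneg_nonneg power_mono)
next
  case False
  have "d * d \<le> (e + t) * d" "e * d \<le> e * (e + t)" "e * t \<le> R * t" "t * d \<le> t * R"
    using False assms by (auto intro: mult_left_mono mult_right_mono)
  then show ?thesis by (simp add: power2_eq_square algebra_simps)
qed

lemma closest_point_perturbed_step:
  fixes x y u v S :: "'a::euclidean_space"
  assumes X: "closed X" "convex X" "X \<noteq> {}" and y: "y \<in> X"
    and x': "x' = closest_point X (x - a *\<^sub>R (u - S + c *\<^sub>R v))"
    and R: "norm (x' - y) \<le> R" and S: "norm S \<le> t" and a: "0 \<le> a"
  shows "(norm (x' - y))\<^sup>2 \<le> (norm (x - y))\<^sup>2 - 2 * a * (u \<bullet> (x - y)) + a\<^sup>2 * (norm u)\<^sup>2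
          + a\<^sup>2 * c\<^sup>2 * (norm v)\<^sup>2 + 2 * a * c * ((a *\<^sub>R u - (x - y)) \<bullet> v) + 2 * (a * t) * R"
proof -
  define w where "w = x - a *\<^sub>R (u + c *\<^sub>R v)"
  have "norm (x' - closest_point X w) \<le> norm (a *\<^sub>R S)"
    using closest_point_lipschitz[OF X(2,1,3), of "w + a *\<^sub>R S" w]
    by (simp add: x' w_def dist_norm algebra_simps)
  also have "\<dots> \<le> a * t"
    using S a by (simp add: mult_left_mono)
  finally have near: "norm (x' - closest_point X w) \<le> a * t" .
  have nonexpansive: "norm (closest_point X w - y) \<le> norm (w - y)"
    using closest_point_lipschitz[OF X(2,1,3), of w y] closest_point_self[OF y] by (simp add: dist_norm)
  have "0 \<le> a * t"
    using a S by (meson mult_nonneg_nonneg norm_ge_zero order_trans)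
  moreover have "norm (x' - y) \<le> norm (closest_point X w - y) + a * t"
    using norm_triangle_ineq[of "x' - closest_point X w" "closest_point X w - y"] near by simp
  ultimately have "(norm (x' - y))\<^sup>2 \<le> (norm (closest_point X w - y))\<^sup>2 + 2 * (a * t) * R"
    using R by (intro power2_le_add_bounded) auto
  also have "\<dots> \<le> (norm (w - y))\<^sup>2 + 2 * (a * t) * R"
    using nonexpansive by (simp add: power_mono)
  also have "(norm (w - y))\<^sup>2 = (norm (x - y))\<^sup>2 - 2 * a * (u \<bullet> (x - y)) + a\<^sup>2 * (norm u)\<^sup>2
          + a\<^sup>2 * c\<^sup>2 * (norm v)\<^sup>2 + 2 * a * c * ((a *\<^sub>R u - (x - y)) \<bullet> v)"
    unfolding w_def power2_norm_eq_inner
    by (simp add: inner_diff_left inner_diff_right inner_add_left inner_add_right inner_commute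
        power2_eq_square algebra_simps)
  finally show ?thesis .
qed

locale dpd_aircomp = prob_space M
  for M :: "'w measure" +
  fixes N :: nat
    and f :: "nat \<Rightarrow> 'a::euclidean_space \<Rightarrow> real"
    and g :: "nat \<Rightarrow> 'a \<Rightarrow> 'a"
    and X :: "'a set"
    and Bd :: real
    and xs :: 'a and ls :: "nat \<Rightarrow> real"
    and x0 :: 'a and l0 :: "nat \<Rightarrow> real"
    and a :: "nat \<Rightarrow> real"
    and beta Pmax sig :: real \<comment> \<open>\<open>\<sigma>\<close>; the name \<open>sigma\<close> is taken by the generated measure\<close>
    and h :: "nat \<Rightarrow> nat \<Rightarrow> 'w \<Rightarrow> complex"
    and n :: "nat \<Rightarrow> 'w \<Rightarrow> 'a"
    and iter :: "'w \<Rightarrow> nat \<Rightarrow> 'a \<times> (nat \<Rightarrow> real)"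
    and G L R :: real
  assumes X: "X \<noteq> {}" "compact X" "convex X"
    and f_cont: "\<And>i. i \<le> N \<Longrightarrow> continuous_on UNIV (f i)"
    and g_sub: "\<And>i x. i \<le> N \<Longrightarrow> is_subgradient (f i) x (g i x)"
    and g_meas: "\<And>i. i \<le> N \<Longrightarrow> g i \<in> borel_measurable borel"
    and Bd_nonneg: "0 \<le> Bd"
    and xs_mem: "xs \<in> X"
    and saddle_max: "\<And>lam. lam \<in> dual_box N Bd \<Longrightarrow> lagr f N xs lam \<le> lagr f N xs ls"
      \<comment> \<open>the only half of the saddle-point property that is needed\<close>
    and x0_mem: "x0 \<in> X" and l0_mem: "l0 \<in> dual_box N Bd"
    and a_pos: "\<And>j. 0 < a j"
    and beta_pos: "0 < beta"
    and h_meas: "\<And>i j. h i j \<in> borel_measurable M"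
    and n_int: "\<And>j. integrable M (n j)"
    and n_mean: "\<And>j. (\<integral>\<omega>. n j \<omega> \<partial>M) = 0"
    and n_var_int: "\<And>j. integrable M (\<lambda>\<omega>. (norm (n j \<omega>))\<^sup>2)"
    and n_var: "\<And>j. (\<integral>\<omega>. (norm (n j \<omega>))\<^sup>2 \<partial>M) = sig\<^sup>2"
    and n_indep: "\<And>j. indep_set {n j -` B \<inter> space M | B. B \<in> sets borel} (other_rand M h n j)"
    and iter_def: "\<And>\<omega> j. iter \<omega> j =
        dpd_iter f g X N Bd beta Pmax a (\<lambda>i j. h i j \<omega>) (\<lambda>j. n j \<omega>) x0 l0 j"
    and bnd_G: "\<And>\<omega> i j. \<omega> \<in> space M \<Longrightarrow> i \<in> {1..N} \<Longrightarrow>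
        norm (snd (iter \<omega> j) i *\<^sub>R g i (fst (iter \<omega> j))) \<le> G"
    and bnd_Lx: "\<And>\<omega> j. \<omega> \<in> space M \<Longrightarrow>
        norm (g 0 (fst (iter \<omega> j)) + (\<Sum>i=1..N. snd (iter \<omega> j) i *\<^sub>R g i (fst (iter \<omega> j)))) \<le> L"
    and bnd_R: "\<And>\<omega> j. \<omega> \<in> space M \<Longrightarrow> norm (fst (iter \<omega> j) - xs) \<le> R"
begin

definition primal :: "nat \<Rightarrow> 'w \<Rightarrow> 'a" where
  "primal j \<omega> = fst (iter \<omega> j)"

definition dual :: "nat \<Rightarrow> 'w \<Rightarrow> nat \<Rightarrow> real" where
  "dual j \<omega> = snd (iter \<omega> j)"

definition active :: "nat \<Rightarrow> 'w \<Rightarrow> nat set" where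
  "active j \<omega> = part_set g N beta Pmax (\<lambda>i. h i j \<omega>) (primal j \<omega>) (dual j \<omega>)"

definition lagr_grad :: "nat \<Rightarrow> 'w \<Rightarrow> 'a" where
  "lagr_grad j \<omega> = g 0 (primal j \<omega>) + (\<Sum>i=1..N. dual j \<omega> i *\<^sub>R g i (primal j \<omega>))"

definition dropped :: "nat \<Rightarrow> 'w \<Rightarrow> 'a" where
  "dropped j \<omega> = (\<Sum>i\<in>{1..N} - active j \<omega>. dual j \<omega> i *\<^sub>R g i (primal j \<omega>))"

definition others_gen :: "nat \<Rightarrow> 'w set set" where
  "others_gen j = (\<Union>i j'. {h i j' -` B \<inter> space M | B. B \<in> sets borel})
      \<union> (\<Union>j'\<in>-{j}. {n j' -` B \<inter> space M | B. B \<in> sets borel})"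

definition others :: "nat \<Rightarrow> 'w measure" where
  "others j = sigma (space M) (others_gen j)"

lemma active_subset: "active j \<omega> \<subseteq> {1..N}"
  by (auto simp: active_def part_set_def)

lemma card_active_le: "card (active j \<omega>) \<le> N"
  using card_mono[OF finite_atLeastAtMost active_subset] by simp

lemma iter_Suc:
  "iter \<omega> (Suc j) =
    (closest_point X (primal j \<omega> - a j *\<^sub>R (g 0 (primal j \<omega>)
        + ((\<Sum>i\<in>active j \<omega>. dual j \<omega> i *\<^sub>R g i (primal j \<omega>)) + sqrt beta *\<^sub>R n j \<omega>))),
     \<lambda>i. closest_point {0..Bd} (dual j \<omega> i + a j * f i (primal j \<omega>)))"
  by (simp add: iter_def primal_def dual_def active_def Let_def)

lemma primal_mem: "primal j \<omega> \<in> X"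
proof (cases j)
  case 0
  then show ?thesis by (simp add: primal_def iter_def x0_mem)
next
  case (Suc j')
  then show ?thesis
    using X by (simp add: primal_def[of "Suc j'"] iter_Suc closest_point_in_set compact_imp_closed)
qed

lemma dual_mem: "dual j \<omega> \<in> dual_box N Bd"
proof (cases j)
  case 0
  then show ?thesis by (simp add: dual_def iter_def l0_mem)
next
  case (Suc j')
  have "closest_point {0..Bd} t \<in> {0..Bd}" for t :: real
    using Bd_nonneg by (intro closest_point_in_set) auto
  then show ?thesis
    by (simp add: Suc dual_def[of "Suc j'"] iter_Suc dual_box_def)
qed

lemma primal_Suc:
  "primal (Suc j) \<omega> = closest_point X (primal j \<omega> - a j *\<^sub>R (lagr_grad j \<omega> - dropped j \<omega> + sqrt beta *\<^sub>R n j \<omega>))"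
proof -
  have "(\<Sum>i=1..N. dual j \<omega> i *\<^sub>R g i (primal j \<omega>))
      = dropped j \<omega> + (\<Sum>i\<in>active j \<omega>. dual j \<omega> i *\<^sub>R g i (primal j \<omega>))"
    unfolding dropped_def using active_subset by (intro sum.subset_diff) auto
  then show ?thesis
    by (simp add: primal_def[of "Suc j"] iter_Suc lagr_grad_def algebra_simps)
qed

lemma norm_dropped_le:
  assumes "\<omega> \<in> space M"
  shows "norm (dropped j \<omega>) \<le> (real N - card (active j \<omega>)) * G"
proof -
  have "norm (dropped j \<omega>) \<le> (\<Sum>i\<in>{1..N} - active j \<omega>. norm (dual j \<omega> i *\<^sub>R g i (primal j \<omega>)))"
    unfolding dropped_def by (rule norm_sum)
  also have "\<dots> \<le> (\<Sum>i\<in>{1..N} - active j \<omega>. G)"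
    using bnd_G[OF assms] by (intro sum_mono) (auto simp: primal_def dual_def)
  also have "\<dots> = (real N - card (active j \<omega>)) * G"
    using card_Diff_subset[OF finite_subset[OF active_subset] active_subset] card_active_le[of j \<omega>]
    by (simp add: of_nat_diff)
  finally show ?thesis .
qed

lemma f_meas: "i \<le> N \<Longrightarrow> f i \<in> borel_measurable borel"
  using f_cont by (rule borel_measurable_continuous_onI)

lemma iterate_measurable:
  assumes h: "\<And>i j'. h i j' \<in> borel_measurable F"
    and n: "\<And>j'. j' < j \<Longrightarrow> n j' \<in> borel_measurable F"
  shows primal_measurable: "primal j \<in> borel_measurable F"
    and dual_measurable: "i \<le> N \<Longrightarrow> (\<lambda>\<omega>. dual j \<omega> i) \<in> borel_measurable F"
    and lagr_grad_measurable: "lagr_grad j \<in> borel_measurable F"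
proof -
  have "primal j \<in> borel_measurable F \<and> (\<forall>i\<le>N. (\<lambda>\<omega>. dual j \<omega> i) \<in> borel_measurable F)"
    unfolding primal_def[abs_def] dual_def iter_def
    using X Bd_nonneg by (intro dpd_iter_measurable f_meas g_meas h n) (auto intro: compact_imp_closed)
  then show primal: "primal j \<in> borel_measurable F" and dual: "\<And>i. i \<le> N \<Longrightarrow> (\<lambda>\<omega>. dual j \<omega> i) \<in> borel_measurable F"
    by auto
  show "lagr_grad j \<in> borel_measurable F"
    unfolding lagr_grad_def
    using measurable_compose[OF primal g_meas]
    by (intro borel_measurable_add borel_measurable_sum borel_measurable_scaleR dual) auto
qed

lemma n_meas: "n j \<in> borel_measurable M"
  using n_int by (rule borel_measurable_integrable)

lemmas primal_random = primal_measurable[OF h_meas n_meas]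
  and dual_random = dual_measurable[OF h_meas n_meas]
  and lagr_grad_random = lagr_grad_measurable[OF h_meas n_meas]

lemma others_gen_subset: "others_gen j \<subseteq> Pow (space M)"
  by (auto simp: others_gen_def)

lemma space_others [simp]: "space (others j) = space M"
  by (simp add: others_def space_measure_of_conv)

lemma sets_others: "sets (others j) = other_rand M h n j"
  by (simp add: others_def other_rand_def others_gen_def[symmetric] sets_measure_of[OF others_gen_subset])

lemma h_measurable_others: "h i j' \<in> borel_measurable (others j)"
  unfolding others_def by (rule measurable_sigma_of_preimages[OF others_gen_subset]) (auto simp: others_gen_def)

lemma n_measurable_others: "j' \<noteq> j \<Longrightarrow> n j' \<in> borel_measurable (others j)"
  unfolding others_def by (rule measurable_sigma_of_preimages[OF others_gen_subset]) (auto simp: others_gen_def)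

lemma card_active_measurable: "(\<lambda>\<omega>. real (card (active j \<omega>))) \<in> borel_measurable M"
proof -
  have "(\<lambda>\<omega>. \<Sum>i\<in>active j \<omega>. 1::real) \<in> borel_measurable M"
    unfolding active_def
    using measurable_compose[OF primal_random g_meas]
    by (intro borel_measurable_sum_part_set borel_measurable_scaleR dual_random h_meas) auto
  then show ?thesis by simp
qed

lemma lagr_measurable: "(\<lambda>\<omega>. lagr f N (primal j \<omega>) (dual j \<omega>)) \<in> borel_measurable M"
  unfolding lagr_def
  using measurable_compose[OF primal_random f_meas]
  by (intro borel_measurable_add borel_measurable_sum borel_measurable_times dual_random) auto

lemma norm_primal_diff_le: "\<omega> \<in> space M \<Longrightarrow> norm (primal j \<omega> - xs) \<le> R"
  using bnd_R by (simp add: primal_def)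

lemma norm_lagr_grad_le: "\<omega> \<in> space M \<Longrightarrow> norm (lagr_grad j \<omega>) \<le> L"
  using bnd_Lx by (simp add: lagr_grad_def primal_def dual_def)

lemma lagr_iterate_bounded:
  obtains B where "\<And>j \<omega>. \<bar>lagr f N (primal j \<omega>) (dual j \<omega>)\<bar> \<le> B"
proof -
  have "bounded (\<Union>i\<in>{..N}. f i ` X)"
    using X f_cont
    by (intro bounded_UN ballI compact_imp_bounded compact_continuous_image) (auto intro: continuous_on_subset)
  then obtain C where C: "\<And>i x. i \<le> N \<Longrightarrow> x \<in> X \<Longrightarrow> \<bar>f i x\<bar> \<le> C"
    unfolding bounded_real by blast
  have "\<bar>lagr f N (primal j \<omega>) (dual j \<omega>)\<bar> \<le> C + (\<Sum>i=1..N. Bd * C)" for j \<omega>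
  proof -
    have "\<bar>dual j \<omega> i * f i (primal j \<omega>)\<bar> \<le> Bd * C" if "i \<in> {1..N}" for i
      using that dual_mem[of j \<omega>] C[of i, OF _ primal_mem]
      by (auto simp: dual_box_def abs_mult intro!: mult_mono)
    then have "\<bar>\<Sum>i=1..N. dual j \<omega> i * f i (primal j \<omega>)\<bar> \<le> (\<Sum>i=1..N. Bd * C)"
      by (intro order_trans[OF sum_abs sum_mono])
    moreover have "\<bar>f 0 (primal j \<omega>)\<bar> \<le> C"
      using C primal_mem by blast
    ultimately show ?thesis
      unfolding lagr_def by linarith
  qed
  then show thesis by (rule that)
qed

lemma integrable_lagr: "integrable M (\<lambda>\<omega>. lagr f N (primal j \<omega>) (dual j \<omega>))"
proof -
  obtain B where "\<And>j \<omega>. \<bar>lagr f N (primal j \<omega>) (dual j \<omega>)\<bar> \<le> B"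
    using lagr_iterate_bounded by blast
  then show ?thesis
    by (intro integrable_const_bound[where B=B] lagr_measurable) auto
qed

lemma integrable_sq_dist: "integrable M (\<lambda>\<omega>. (norm (primal j \<omega> - xs))\<^sup>2)"
proof (rule integrable_const_bound[where B="R\<^sup>2"])
  show "(\<lambda>\<omega>. (norm (primal j \<omega> - xs))\<^sup>2) \<in> borel_measurable M"
    using primal_random[of j] by measurable
qed (auto intro!: AE_I2 power_mono norm_primal_diff_le)

lemma integrable_card_active: "integrable M (\<lambda>\<omega>. real (card (active j \<omega>)))"
  using card_active_le by (intro integrable_const_bound[where B="real N"] card_active_measurable) auto

lemma expected_card_active_le: "(\<integral>\<omega>. real (card (active j \<omega>)) \<partial>M) \<le> real N"
  using integral_mono[OF integrable_card_active, of "\<lambda>_. real N"] card_active_le by (simp add: prob_space)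

lemma descent_step:
  assumes \<omega>: "\<omega> \<in> space M"
  shows "2 * a j * (lagr f N (primal j \<omega>) (dual j \<omega>) - lagr f N xs ls)
    \<le> (norm (primal j \<omega> - xs))\<^sup>2 - (norm (primal (Suc j) \<omega> - xs))\<^sup>2
      + (a j)\<^sup>2 * L\<^sup>2 + (a j)\<^sup>2 * beta * (norm (n j \<omega>))\<^sup>2
      + 2 * a j * sqrt beta * ((a j *\<^sub>R lagr_grad j \<omega> - (primal j \<omega> - xs)) \<bullet> n j \<omega>)
      + 2 * a j * G * R * (real N - card (active j \<omega>))"
proof -
  have a: "0 \<le> a j"
    using a_pos less_imp_le by blast
  have "(norm (primal (Suc j) \<omega> - xs))\<^sup>2 \<le> (norm (primal j \<omega> - xs))\<^sup>2
      - 2 * a j * (lagr_grad j \<omega> \<bullet> (primal j \<omega> - xs)) + (a j)\<^sup>2 * (norm (lagr_grad j \<omega>))\<^sup>2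
      + (a j)\<^sup>2 * (sqrt beta)\<^sup>2 * (norm (n j \<omega>))\<^sup>2
      + 2 * a j * sqrt beta * ((a j *\<^sub>R lagr_grad j \<omega> - (primal j \<omega> - xs)) \<bullet> n j \<omega>)
      + 2 * (a j * ((real N - card (active j \<omega>)) * G)) * R"
    by (rule closest_point_perturbed_step[OF compact_imp_closed[OF X(2)] X(3,1) xs_mem primal_Suc
          norm_primal_diff_le[OF \<omega>] norm_dropped_le[OF \<omega>] a])
  moreover have "lagr f N (primal j \<omega>) (dual j \<omega>) - lagr f N xs (dual j \<omega>)
      \<le> lagr_grad j \<omega> \<bullet> (primal j \<omega> - xs)"
    unfolding lagr_grad_def
    by (rule lagr_diff_le_inner_subgradient) (use g_sub dual_mem in \<open>auto simp: dual_box_def\<close>)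
  then have "2 * a j * (lagr f N (primal j \<omega>) (dual j \<omega>) - lagr f N xs ls)
      \<le> 2 * a j * (lagr_grad j \<omega> \<bullet> (primal j \<omega> - xs))"
    using saddle_max[OF dual_mem, of j \<omega>] a by (intro mult_left_mono) auto
  moreover have "(a j)\<^sup>2 * (norm (lagr_grad j \<omega>))\<^sup>2 \<le> (a j)\<^sup>2 * L\<^sup>2"
    using norm_lagr_grad_le[OF \<omega>] by (intro mult_left_mono power_mono) auto
  moreover have "(a j)\<^sup>2 * (sqrt beta)\<^sup>2 * (norm (n j \<omega>))\<^sup>2 = (a j)\<^sup>2 * beta * (norm (n j \<omega>))\<^sup>2"
    using beta_pos by simp
  moreover have "2 * (a j * ((real N - card (active j \<omega>)) * G)) * R
      = 2 * a j * G * R * (real N - card (active j \<omega>))"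
    by (simp add: algebra_simps)
  ultimately show ?thesis
    by linarith
qed

lemma expected_descent_step:
  "2 * a j * ((\<integral>\<omega>. lagr f N (primal j \<omega>) (dual j \<omega>) \<partial>M) - lagr f N xs ls)
    \<le> (\<integral>\<omega>. (norm (primal j \<omega> - xs))\<^sup>2 \<partial>M) - (\<integral>\<omega>. (norm (primal (Suc j) \<omega> - xs))\<^sup>2 \<partial>M)
      + (a j)\<^sup>2 * (beta * sig\<^sup>2 + L\<^sup>2)
      + 2 * a j * G * R * (real N - (\<integral>\<omega>. real (card (active j \<omega>)) \<partial>M))"
proof -
  define Y where "Y \<omega> = a j *\<^sub>R lagr_grad j \<omega> - (primal j \<omega> - xs)" for \<omega>
  \<comment> \<open>\<open>Y\<close> does not depend on \<open>n j\<close>, which makes the noise cross term vanish in expectation\<close>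
  have "Y \<in> borel_measurable (others j)"
    unfolding Y_def
    using lagr_grad_measurable[OF h_measurable_others n_measurable_others, of j]
      primal_measurable[OF h_measurable_others n_measurable_others, of j]
    by (intro borel_measurable_diff borel_measurable_scaleR borel_measurable_const) auto
  moreover have "integrable M Y"
  proof (rule integrable_const_bound[where B="a j * L + R"])
    show "AE \<omega> in M. norm (Y \<omega>) \<le> a j * L + R"
    proof (rule AE_I2)
      fix \<omega> assume \<omega>: "\<omega> \<in> space M"
      have "norm (a j *\<^sub>R lagr_grad j \<omega>) \<le> a j * L"
        using norm_lagr_grad_le[OF \<omega>] a_pos[of j] by (simp add: mult_left_mono)
      then show "norm (Y \<omega>) \<le> a j * L + R"
        unfolding Y_def using norm_triangle_ineq4 norm_primal_diff_le[OF \<omega>] by (smt (verit))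
    qed
    show "Y \<in> borel_measurable M"
      unfolding Y_def using lagr_grad_random primal_random
      by (intro borel_measurable_diff borel_measurable_scaleR borel_measurable_const)
  qed
  ultimately have noise_int: "integrable M (\<lambda>\<omega>. Y \<omega> \<bullet> n j \<omega>)"
    and noise_zero: "(\<integral>\<omega>. Y \<omega> \<bullet> n j \<omega> \<partial>M) = 0"
    using integral_inner_indep_mean_zero[of "n j" "others j" Y] n_indep[of j] n_int n_mean
    by (simp_all add: sets_others)
  have "(\<integral>\<omega>. 2 * a j * (lagr f N (primal j \<omega>) (dual j \<omega>) - lagr f N xs ls) \<partial>M)
    \<le> (\<integral>\<omega>. (norm (primal j \<omega> - xs))\<^sup>2 - (norm (primal (Suc j) \<omega> - xs))\<^sup>2
      + (a j)\<^sup>2 * L\<^sup>2 + (a j)\<^sup>2 * beta * (norm (n j \<omega>))\<^sup>2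
      + 2 * a j * sqrt beta * (Y \<omega> \<bullet> n j \<omega>) + 2 * a j * G * R * (real N - card (active j \<omega>)) \<partial>M)"
    using descent_step integrable_lagr integrable_sq_dist integrable_card_active noise_int n_var_int
    by (intro integral_mono) (auto simp: Y_def)
  also have "\<dots> = (\<integral>\<omega>. (norm (primal j \<omega> - xs))\<^sup>2 \<partial>M) - (\<integral>\<omega>. (norm (primal (Suc j) \<omega> - xs))\<^sup>2 \<partial>M)
      + (a j)\<^sup>2 * (beta * sig\<^sup>2 + L\<^sup>2)
      + 2 * a j * G * R * (real N - (\<integral>\<omega>. real (card (active j \<omega>)) \<partial>M))"
    using integrable_sq_dist integrable_card_active noise_int n_var_int noise_zero n_var
    by (simp add: algebra_simps prob_space)
  also have "(\<integral>\<omega>. 2 * a j * (lagr f N (primal j \<omega>) (dual j \<omega>) - lagr f N xs ls) \<partial>M)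
      = 2 * a j * ((\<integral>\<omega>. lagr f N (primal j \<omega>) (dual j \<omega>) \<partial>M) - lagr f N xs ls)"
    using integrable_lagr by (simp add: prob_space)
  finally show ?thesis .
qed

lemma telescoped_gap_bound:
  "2 * (\<Sum>j<k. a j * ((\<integral>\<omega>. lagr f N (primal j \<omega>) (dual j \<omega>) \<partial>M) - lagr f N xs ls))
    \<le> (norm (x0 - xs))\<^sup>2 + (beta * sig\<^sup>2 + L\<^sup>2) * (\<Sum>j<k. (a j)\<^sup>2)
      + 2 * (R * G * (\<Sum>j<k. (real N - (\<integral>\<omega>. real (card (active j \<omega>)) \<partial>M)) * a j))"
proof -
  define d where "d j = (\<integral>\<omega>. (norm (primal j \<omega> - xs))\<^sup>2 \<partial>M)" for j
  have "2 * (\<Sum>j<k. a j * ((\<integral>\<omega>. lagr f N (primal j \<omega>) (dual j \<omega>) \<partial>M) - lagr f N xs ls))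
      \<le> (\<Sum>j<k. (d j - d (Suc j)) + ((beta * sig\<^sup>2 + L\<^sup>2) * (a j)\<^sup>2
          + 2 * (R * G * ((real N - (\<integral>\<omega>. real (card (active j \<omega>)) \<partial>M)) * a j))))"
    unfolding sum_distrib_left d_def
    using expected_descent_step by (intro sum_mono) (simp add: algebra_simps)
  also have "\<dots> = d 0 - d k + (beta * sig\<^sup>2 + L\<^sup>2) * (\<Sum>j<k. (a j)\<^sup>2)
      + 2 * (R * G * (\<Sum>j<k. (real N - (\<integral>\<omega>. real (card (active j \<omega>)) \<partial>M)) * a j))"
    by (simp add: sum.distrib sum_lessThan_telescope' flip: sum_distrib_left)
  also have "d 0 = (norm (x0 - xs))\<^sup>2"
    by (simp add: d_def primal_def iter_def prob_space)
  finally have "2 * (\<Sum>j<k. a j * ((\<integral>\<omega>. lagr f N (primal j \<omega>) (dual j \<omega>) \<partial>M) - lagr f N xs ls))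
      \<le> (norm (x0 - xs))\<^sup>2 - d k + (beta * sig\<^sup>2 + L\<^sup>2) * (\<Sum>j<k. (a j)\<^sup>2)
        + 2 * (R * G * (\<Sum>j<k. (real N - (\<integral>\<omega>. real (card (active j \<omega>)) \<partial>M)) * a j))" .
  moreover have "0 \<le> d k"
    unfolding d_def by simp
  ultimately show ?thesis by linarith
qed

lemma weighted_average_gap:
  assumes "1 \<le> k"
  shows "(\<integral>\<omega>. (\<Sum>j<k. a j * lagr f N (primal j \<omega>) (dual j \<omega>)) / (\<Sum>j<k. a j) \<partial>M) - lagr f N xs ls
    \<le> (1 / (\<Sum>j<k. a j)) * (R * G * (\<Sum>j<k. (real N - (\<integral>\<omega>. real (card (active j \<omega>)) \<partial>M)) * a j)
        + ((norm (x0 - xs))\<^sup>2 + (beta * sig\<^sup>2 + L\<^sup>2) * (\<Sum>j<k. (a j)\<^sup>2)) / 2)"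
proof -
  have Z: "0 < (\<Sum>j<k. a j)"
    using assms a_pos by (intro sum_pos) (auto simp: lessThan_empty_iff)
  have "(\<integral>\<omega>. (\<Sum>j<k. a j * lagr f N (primal j \<omega>) (dual j \<omega>)) / (\<Sum>j<k. a j) \<partial>M) - lagr f N xs ls
      = (\<Sum>j<k. a j * ((\<integral>\<omega>. lagr f N (primal j \<omega>) (dual j \<omega>) \<partial>M) - lagr f N xs ls)) / (\<Sum>j<k. a j)"
    using Z integrable_lagr
    by (simp add: Bochner_Integration.integral_sum field_simps sum_distrib_left sum_distrib_right sum_subtractf)
  then show ?thesis
    using telescoped_gap_bound[of k] Z by (simp add: field_simps)
qed

end

theorem lemma2:
  fixes M :: "'w measure"
    and N :: nat
    and f :: "nat \<Rightarrow> real^'d \<Rightarrow> real"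
    and g :: "nat \<Rightarrow> real^'d \<Rightarrow> real^'d"
    and X :: "(real^'d) set"
    and xbar :: "real^'d"
    and gam qt r Bd :: real
    and lt :: "nat \<Rightarrow> real"
    and xs :: "real^'d" and ls :: "nat \<Rightarrow> real"
    and x0 :: "real^'d" and l0 :: "nat \<Rightarrow> real"
    and a :: "nat \<Rightarrow> real"
    and beta Pmax sigma :: real
    and h :: "nat \<Rightarrow> nat \<Rightarrow> 'w \<Rightarrow> complex"
    and n :: "nat \<Rightarrow> 'w \<Rightarrow> real^'d"
    and iter :: "'w \<Rightarrow> nat \<Rightarrow> (real^'d) \<times> (nat \<Rightarrow> real)"
    and Abar :: "nat \<Rightarrow> real"
    and G L R :: real
    and k :: nat
  assumes P: "prob_space M"
    and N_pos: "N \<ge> 1"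
    and f_convex: "\<And>i. i \<le> N \<Longrightarrow> convex_on UNIV (f i)"
    and X: "X \<noteq> {}" "compact X" "convex X"
    and g_sub: "\<And>i x. i \<le> N \<Longrightarrow> is_subgradient (f i) x (g i x)"
    and g_meas: "\<And>i. i \<le> N \<Longrightarrow> g i \<in> borel_measurable borel"
    and slater: "xbar \<in> X" "\<And>i. i \<in> {1..N} \<Longrightarrow> f i xbar < 0"
    and gam_def: "gam = Min ((\<lambda>i. - f i xbar) ` {1..N})"
    and lt_nonneg: "\<And>i. i \<in> {1..N} \<Longrightarrow> lt i \<ge> 0"
    and qt_def: "qt = dual_fn f N X lt"
    and r_pos: "r > 0"
    and Bd_def: "Bd = (f 0 xbar - qt) / gam + r"
    and saddle_mem: "xs \<in> X" "ls \<in> dual_box N Bd"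
    and saddle: "\<And>x lam. x \<in> X \<Longrightarrow> lam \<in> dual_box N Bd \<Longrightarrow>
                   lagr f N xs lam \<le> lagr f N xs ls \<and> lagr f N xs ls \<le> lagr f N x ls"
    and saddle_val: "lagr f N xs ls = opt_val f N X"
    and init: "x0 \<in> X" "l0 \<in> dual_box N Bd"
    and step: "\<And>j. 0 < a j \<and> a j < 1"
    and beta_pos: "beta > 0" and Pmax_pos: "Pmax > 0"
    and h_meas: "\<And>i j. h i j \<in> borel_measurable M"
    and n_meas: "\<And>j. n j \<in> borel_measurable M"
    and n_int: "\<And>j. integrable M (n j)"
    and n_mean: "\<And>j. (\<integral>\<omega>. n j \<omega> \<partial>M) = 0"
    and n_var_int: "\<And>j. integrable M (\<lambda>\<omega>. (norm (n j \<omega>))\<^sup>2)"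
    and n_var: "\<And>j. (\<integral>\<omega>. (norm (n j \<omega>))\<^sup>2 \<partial>M) = sigma\<^sup>2"
    and n_indep: "\<And>j. prob_space.indep_set M
                    {n j -` B \<inter> space M | B. B \<in> sets borel} (other_rand M h n j)"
    and iter_def: "\<And>\<omega> j. iter \<omega> j =
        dpd_iter f g X N Bd beta Pmax a (\<lambda>i j. h i j \<omega>) (\<lambda>j. n j \<omega>) x0 l0 j"
    and Abar_def: "\<And>j. Abar j = (\<integral>\<omega>. real (card (part_set g N beta Pmax (\<lambda>i. h i j \<omega>)
                                   (fst (iter \<omega> j)) (snd (iter \<omega> j)))) \<partial>M)"
    and GLR_pos: "G > 0" "L > 0" "R > 0" "L > G"
    and bnd_G: "\<And>\<omega> i j. \<omega> \<in> space M \<Longrightarrow> i \<in> {1..N} \<Longrightarrow>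
                  norm (snd (iter \<omega> j) i *\<^sub>R g i (fst (iter \<omega> j))) \<le> G"
    and bnd_Lx: "\<And>\<omega> j. \<omega> \<in> space M \<Longrightarrow>
                  norm (g 0 (fst (iter \<omega> j))
                        + (\<Sum>i=1..N. snd (iter \<omega> j) i *\<^sub>R g i (fst (iter \<omega> j)))) \<le> L"
    and bnd_F: "\<And>\<omega> j. \<omega> \<in> space M \<Longrightarrow>
                  sqrt (\<Sum>i=1..N. (f i (fst (iter \<omega> j)))\<^sup>2) \<le> L"
    and bnd_R: "\<And>\<omega> j. \<omega> \<in> space M \<Longrightarrow> norm (fst (iter \<omega> j) - xs) \<le> R"
    and k_pos: "k \<ge> 1"
  shows "(\<integral>\<omega>. (\<Sum>j<k. a j * lagr f N (fst (iter \<omega> j)) (snd (iter \<omega> j))) / (\<Sum>j<k. a j) \<partial>M)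
           - lagr f N xs ls
         \<le> (1 / (\<Sum>j<k. a j)) *
            (R * G * (\<Sum>j<k. (real N - Abar j) * a j)
             + (beta * sigma\<^sup>2 + L\<^sup>2) * (\<Sum>j<k. (a j)\<^sup>2)
             + 2 * L * G * (\<Sum>j<k. (real N - Abar j) * (a j)\<^sup>2)
             + (\<integral>\<omega>. (norm (x0 - xs))\<^sup>2 \<partial>M)
             + L\<^sup>2 * (\<Sum>j<k. (real N - Abar j)\<^sup>2 * (a j)\<^sup>2))"
proof -
  have Bd: "0 \<le> Bd"
    using init(2) N_pos unfolding dual_box_def by force
  have f_cont: "continuous_on UNIV (f i)" if "i \<le> N" for i
    using f_convex[OF that] by (intro convex_on_continuous) auto
  have saddle_max: "lagr f N xs lam \<le> lagr f N xs ls" if "lam \<in> dual_box N Bd" for lam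
    using saddle[OF saddle_mem(1) that] by blast
  have a_pos: "0 < a j" for j
    using step by blast
  interpret dpd_aircomp M N f g X Bd xs ls x0 l0 a beta Pmax sigma h n iter G L R
    by (rule dpd_aircomp.intro[OF P dpd_aircomp_axioms.intro[OF X f_cont g_sub g_meas Bd saddle_mem(1)
          saddle_max init a_pos beta_pos h_meas n_int n_mean n_var_int n_var n_indep iter_def bnd_G bnd_Lx bnd_R]])
  have Abar: "Abar j = (\<integral>\<omega>. real (card (active j \<omega>)) \<partial>M)" for j
    by (simp add: Abar_def active_def primal_def dual_def)
  have "0 \<le> 2 * L * G * (\<Sum>j<k. (real N - Abar j) * (a j)\<^sup>2)"
    "0 \<le> L\<^sup>2 * (\<Sum>j<k. (real N - Abar j)\<^sup>2 * (a j)\<^sup>2)"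
    "0 \<le> (beta * sigma\<^sup>2 + L\<^sup>2) * (\<Sum>j<k. (a j)\<^sup>2)"
    using GLR_pos beta_pos expected_card_active_le by (auto simp: Abar intro!: mult_nonneg_nonneg sum_nonneg)
  moreover have "(\<integral>\<omega>. (norm (x0 - xs))\<^sup>2 \<partial>M) = (norm (x0 - xs))\<^sup>2"
    by (simp add: prob_space)
  moreover have "0 \<le> (norm (x0 - xs))\<^sup>2" "0 \<le> 1 / (\<Sum>j<k. a j)"
    using a_pos by (auto intro: sum_nonneg less_imp_le)
  ultimately show ?thesis
    by (intro order_trans[OF weighted_average_gap[OF k_pos, folded Abar, unfolded primal_def dual_def]]
        mult_left_mono) argo+
qed

end
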